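(* Let $\mathcal{A}=\mathcal{R}*_K\mathcal{S}*_L\mathcal{T}\in\mathbb{C}^{I_1\times\cdots\times I_N\times J_1\times\cdots\times J_M}$, where $\mathcal{R}\in\mathbb{C}^{I_1\times\cdots\times I_N\times H_1\times\cdots\times H_K}$, $\mathcal{S}\in\mathbb{C}^{H_1\times\cdots\times H_K\times G_1\times\cdots\times G_L}$ and $\mathcal{T}\in\mathbb{C}^{G_1\times\cdots\times G_L\times J_1\times\cdots\times J_M}$. Then $\mathcal{A}_{\pi\dagger}=\mathcal{T}^{\dagger}*_L\mathcal{S}^{\dagger}*_K\mathcal{R}^{\dagger}$ if and only if $\mathcal{S}^{\dagger}=(\mathcal{R}^{\dagger}*_N\mathcal{A}*_M\mathcal{T}^{\dagger})^{\dagger}+\mathcal{Y}$ for some $\mathcal{Y}\in\mathbb{C}^{G_1\times\cdots\times G_L\times H_1\times\cdots\times H_K}$ satisfying $\mathcal{T}^{\dagger}*_L\mathcal{Y}*_K\mathcal{R}^{\dagger}=\mathcal{O}$ (the zero tensor).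
   Context: $\mathbb{C}^{I_1\times\cdots\times I_N}$ denotes the set of complex tensors of order $N$ and dimension $I_1\times\cdots\times I_N$. For $\mathcal{A}\in\mathbb{C}^{I_1\times\cdots\times I_N\times K_1\times\cdots\times K_N}$ and $\mathcal{B}\in\mathbb{C}^{K_1\times\cdots\times K_N\times J_1\times\cdots\times J_M}$, the Einstein product $\mathcal{A}*_N\mathcal{B}$ is defined by $(\mathcal{A}*_N\mathcal{B})_{i_1\dots i_N j_1\dots j_M}=\sum_{k_1,\dots,k_N}a_{i_1\dots i_N k_1\dots k_N}b_{k_1\dots k_N j_1\dots j_M}$; it is associative. $\mathcal{A}^H$ denotes the conjugate transpose. For $\mathcal{A}\in\mathbb{C}^{I_1\times\cdots\times I_N\times J_1\times\cdots\times J_M}$ the Moore–Penrose inverse $\mathcal{A}^{\dagger}$ is the unique $\mathcal{X}\in\mathbb{C}^{J_1\times\cdots\times J_M\times I_1\times\cdots\times I_N}$ with $\mathcal{A}*_M\mathcal{X}*_N\mathcal{A}=\mathcal{A}$, $\mathcal{X}*_N\mathcal{A}*_M\mathcal{X}=\mathcal{X}$, $(\mathcal{A}*_M\mathcal{X})^H=\mathcal{A}*_M\mathcal{X}$, $(\mathcal{X}*_N\mathcal{A})^H=\mathcal{X}*_N\mathcal{A}$. Given the factorization $\mathcal{A}=\mathcal{R}*_K\mathcal{S}*_L\mathcal{T}$, the product Moore–Penrose inverse of $\mathcal{A}$ is $\mathcal{A}_{\pi\dagger}=\mathcal{T}^{\dagger}*_L(\mathcal{R}^{\dagger}*_N\mathcal{A}*_M\mathcal{T}^{\dagger})^{\dagger}*_K\mathcal{R}^{\dagger}$.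 *)

theory Defs
  imports Complex_Main
begin

text \<open>A tensor in C^(I_1 x ... x I_N x J_1 x ... x J_M) is represented as a function of
  two multi-indices (row multi-index of length N, column multi-index of length M),
  which vanishes outside the valid index range.\<close>

type_synonym tensor = "nat list \<Rightarrow> nat list \<Rightarrow> complex"

definition idx :: "nat list \<Rightarrow> nat list set" where
  "idx ds = {is. length is = length ds \<and> (\<forall>k<length ds. is ! k < ds ! k)}"

definition tensors :: "nat list \<Rightarrow> nat list \<Rightarrow> tensor set" where
  "tensors Is Js = {A. \<forall>i j. (i \<notin> idx Is \<or> j \<notin> idx Js) \<longrightarrow> A i j = 0}"

definition ein :: "nat list \<Rightarrow> tensor \<Rightarrow> tensor \<Rightarrow> tensor" where
  "ein Ks A B = (\<lambda>i j. \<Sum>k\<in>idx Ks. A i k * B k j)"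

definition ctrans :: "tensor \<Rightarrow> tensor" where
  "ctrans A = (\<lambda>j i. cnj (A i j))"

definition mp :: "nat list \<Rightarrow> nat list \<Rightarrow> tensor \<Rightarrow> tensor" where
  "mp Is Js A = (THE X. X \<in> tensors Js Is \<and>
      ein Is (ein Js A X) A = A \<and>
      ein Js (ein Is X A) X = X \<and>
      ctrans (ein Js A X) = ein Js A X \<and>
      ctrans (ein Is X A) = ein Is X A)"

definition pmp :: "nat list \<Rightarrow> nat list \<Rightarrow> nat list \<Rightarrow> nat list \<Rightarrow>
    tensor \<Rightarrow> tensor \<Rightarrow> tensor \<Rightarrow> tensor" where
  "pmp Is Js Hs Gs R S T =
     (let A = ein Gs (ein Hs R S) T;
          Rd = mp Is Hs R;
          Td = mp Gs Js T
      in ein Hs (ein Gs Td (mp Hs Gs (ein Js (ein Is Rd A) Td))) Rd)"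

end

theory Submission
  imports Defs "HOL-Library.Function_Algebras"
begin

text \<open>Once the product Moore--Penrose inverse is written as T^dag *_L B *_K R^dag with
  B = (R^dag *_N A *_M T^dag)^dag, the equivalence is pure linearity, with witness Y = S^dag - B.
  The substance is that S^dag and B are tensors of the right shape, i.e. that the Moore--Penrose
  inverse, defined by a description, exists.  We follow Penrose's argument.  The powers of a
  Hermitian B are linearly dependent, and B^k W = 0 forces B W = 0; a relation of lowest order
  therefore yields P with P B B = B.  For B = A^H A this gives X with X A A^H = A^H, and dually
  V with V A^H A = A.  Then X V A^H satisfies the four Penrose equations, which determine it
  uniquely.\<close>

lemma finite_idx: "finite (idx ds)"
proof (rule finite_subset)
  let ?m = "Suc (Max (insert 0 (set ds)))"
  show "finite {xs. set xs \<subseteq> {..<?m} \<and> length xs = length ds}"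
    by (rule finite_lists_length_eq) simp
  show "idx ds \<subseteq> {xs. set xs \<subseteq> {..<?m} \<and> length xs = length ds}"
    by (fastforce simp: idx_def in_set_conv_nth less_Suc_eq_le
        intro: order.trans[OF less_imp_le Max_ge])
qed

lemma tensorsI: "(\<And>i j. i \<notin> idx I \<or> j \<notin> idx J \<Longrightarrow> A i j = 0) \<Longrightarrow> A \<in> tensors I J"
  unfolding tensors_def by auto

lemma tensorsD1: "A \<in> tensors I J \<Longrightarrow> i \<notin> idx I \<Longrightarrow> A i j = 0"
  unfolding tensors_def by auto

lemma tensorsD2: "A \<in> tensors I J \<Longrightarrow> j \<notin> idx J \<Longrightarrow> A i j = 0"
  unfolding tensors_def by auto

lemma ein_tensors: "A \<in> tensors I K \<Longrightarrow> B \<in> tensors K J \<Longrightarrow> ein K A B \<in> tensors I J"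
  unfolding ein_def by (rule tensorsI) (auto simp: tensorsD1 tensorsD2)

lemma ctrans_tensors: "A \<in> tensors I J \<Longrightarrow> ctrans A \<in> tensors J I"
  unfolding ctrans_def by (rule tensorsI) (auto simp: tensorsD1 tensorsD2)

lemma diff_tensors:
  "A \<in> tensors I J \<Longrightarrow> B \<in> tensors I J \<Longrightarrow> (\<lambda>i j. A i j - B i j) \<in> tensors I J"
  by (rule tensorsI) (auto simp: tensorsD1 tensorsD2)

lemma sum_tensors:
  assumes "\<And>x. F x \<in> tensors I J"
  shows "(\<lambda>i j. \<Sum>x\<in>S. c x * F x i j) \<in> tensors I J"
  by (rule tensorsI) (auto simp: tensorsD1[OF assms] tensorsD2[OF assms])

lemma ein_assoc: "ein L (ein K A B) C = ein K A (ein L B C)"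
  unfolding ein_def
  by (intro ext) (auto simp: sum_distrib_left sum_distrib_right mult.assoc intro: sum.swap)

lemma ctrans_ctrans [simp]: "ctrans (ctrans A) = A"
  unfolding ctrans_def by simp

lemma ctrans_ein: "ctrans (ein K A B) = ein K (ctrans B) (ctrans A)"
  unfolding ein_def ctrans_def by (intro ext) (auto simp: mult.commute)

lemma ctrans_diff: "ctrans (\<lambda>i j. A i j - B i j) = (\<lambda>i j. ctrans A i j - ctrans B i j)"
  unfolding ctrans_def by simp

lemma ein_zero_left [simp]: "ein K (\<lambda>i j. 0) A = (\<lambda>i j. 0)"
  unfolding ein_def by simp

lemma ein_zero_right [simp]: "ein K A (\<lambda>i j. 0) = (\<lambda>i j. 0)"
  unfolding ein_def by simp

lemma ein_add_left: "ein K (\<lambda>i j. A i j + B i j) C = (\<lambda>i j. ein K A C i j + ein K B C i j)"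
  unfolding ein_def by (intro ext) (auto simp: distrib_right sum.distrib)

lemma ein_add_right: "ein K A (\<lambda>i j. B i j + C i j) = (\<lambda>i j. ein K A B i j + ein K A C i j)"
  unfolding ein_def by (intro ext) (auto simp: distrib_left sum.distrib)

lemma ein_diff_left: "ein K (\<lambda>i j. A i j - B i j) C = (\<lambda>i j. ein K A C i j - ein K B C i j)"
  unfolding ein_def by (intro ext) (auto simp: left_diff_distrib sum_subtractf)

lemma ein_diff_right: "ein K A (\<lambda>i j. B i j - C i j) = (\<lambda>i j. ein K A B i j - ein K A C i j)"
  unfolding ein_def by (intro ext) (auto simp: right_diff_distrib sum_subtractf)

lemma ein_sum_left:
  "ein K (\<lambda>i j. \<Sum>x\<in>S. c x * F x i j) A = (\<lambda>i j. \<Sum>x\<in>S. c x * ein K (F x) A i j)"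
  unfolding ein_def
  by (intro ext) (auto simp: sum_distrib_left sum_distrib_right mult.assoc intro: sum.swap)

lemma ein_sum_right:
  "ein K A (\<lambda>i j. \<Sum>x\<in>S. c x * F x i j) = (\<lambda>i j. \<Sum>x\<in>S. c x * ein K A (F x) i j)"
  unfolding ein_def
  by (intro ext) (auto simp: sum_distrib_left mult.left_commute intro: sum.swap)

lemma tensor_eq_iff_diff_eq_0: "A = B \<longleftrightarrow> (\<lambda>i j. A i j - B i j) = (\<lambda>i j. 0 :: complex)"
  by (metis (no_types, lifting) ext eq_iff_diff_eq_0)

definition id_tensor :: "nat list \<Rightarrow> tensor" where
  "id_tensor Js = (\<lambda>i j. if i \<in> idx Js \<and> i = j then 1 else 0)"

lemma id_tensor_tensors: "id_tensor Js \<in> tensors Js Js"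
  unfolding id_tensor_def by (auto intro!: tensorsI)

lemma ein_id_tensor_left:
  assumes "X \<in> tensors Js Q"
  shows "ein Js (id_tensor Js) X = X"
proof (intro ext)
  fix i j
  show "ein Js (id_tensor Js) X i j = X i j"
    by (cases "i \<in> idx Js")
      (simp_all add: ein_def id_tensor_def finite_idx tensorsD1[OF assms]
        if_distrib[of "\<lambda>c. c * _"] cong: if_cong)
qed

lemma ein_id_tensor_right: "X \<in> tensors P Js \<Longrightarrow> ein Js X (id_tensor Js) = X"
  by (intro ext)
    (auto simp: ein_def id_tensor_def finite_idx tensorsD2 if_distrib[of "\<lambda>c. _ * c"] cong: if_cong)

lemma ctrans_eq_0_iff [simp]: "ctrans A = (\<lambda>i j. 0) \<longleftrightarrow> A = (\<lambda>i j. 0)"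
  by (auto simp: ctrans_def fun_eq_iff)

lemma ctrans_ein_self_eq_0_iff:
  assumes "A \<in> tensors I J"
  shows "ein I (ctrans A) A = (\<lambda>i j. 0) \<longleftrightarrow> A = (\<lambda>i j. 0)"
proof
  assume gram: "ein I (ctrans A) A = (\<lambda>i j. 0)"
  show "A = (\<lambda>i j. 0)"
  proof (intro ext)
    fix i j
    have "complex_of_real (\<Sum>k\<in>idx I. (cmod (A k j))\<^sup>2) = ein I (ctrans A) A j j"
      unfolding ein_def ctrans_def of_real_sum
      by (simp only: complex_norm_square mult.commute[of "cnj _"])
    also have "\<dots> = 0"
      using gram by simp
    finally have "(\<Sum>k\<in>idx I. (cmod (A k j))\<^sup>2) = 0"
      by (simp only: of_real_eq_0_iff)
    then have "i \<in> idx I \<Longrightarrow> A i j = 0"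
      by (simp add: sum_nonneg_eq_0_iff finite_idx)
    then show "A i j = 0"
      using tensorsD1[OF assms] by blast
  qed
qed simp

lemma ein_self_ctrans_eq_0_iff:
  assumes "A \<in> tensors I J"
  shows "ein J A (ctrans A) = (\<lambda>i j. 0) \<longleftrightarrow> A = (\<lambda>i j. 0)"
  using ctrans_ein_self_eq_0_iff[OF ctrans_tensors[OF assms]] by simp

lemma hermitian_ein_ein_eq_0_imp:
  assumes "B \<in> tensors J J" and "ctrans B = B" and "W \<in> tensors J Q"
    and "ein J B (ein J B W) = (\<lambda>i j. 0)"
  shows "ein J B W = (\<lambda>i j. 0)"
proof -
  have "ein J (ctrans (ein J B W)) (ein J B W) = ein J (ctrans W) (ein J B (ein J B W))"
    using assms(2) by (simp add: ctrans_ein ein_assoc)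
  then show ?thesis
    using assms ctrans_ein_self_eq_0_iff[OF ein_tensors[OF assms(1,3)]] by simp
qed

lemma ein_gram_eq_imp_ein_ctrans_eq:
  assumes A: "A \<in> tensors Is Js" and U: "U \<in> tensors Js Js"
    and "ein Js U (ein Is (ctrans A) A) = ein Is (ctrans A) A"
  shows "ein Js U (ctrans A) = ctrans A"
proof -
  define D where "D = (\<lambda>i j. ein Js U (ctrans A) i j - ctrans A i j)"
  have "ein Is D A = (\<lambda>i j. 0)"
    using assms(3) by (simp add: D_def ein_diff_left ein_assoc)
  then have "ein Is D (ctrans D) = (\<lambda>i j. 0)"
    by (simp add: D_def ctrans_diff ctrans_ein ein_diff_right ein_assoc[symmetric])
  moreover have "D \<in> tensors Js Is"
    unfolding D_def using A U by (intro diff_tensors ein_tensors ctrans_tensors)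
  ultimately have "D = (\<lambda>i j. 0)"
    using ein_self_ctrans_eq_0_iff by blast
  then show ?thesis
    by (simp add: D_def tensor_eq_iff_diff_eq_0[of "ein Js U (ctrans A)"])
qed

fun tpow :: "nat list \<Rightarrow> tensor \<Rightarrow> nat \<Rightarrow> tensor" where
  "tpow Js B 0 = id_tensor Js"
| "tpow Js B (Suc n) = ein Js B (tpow Js B n)"

lemma tpow_tensors: "B \<in> tensors Js Js \<Longrightarrow> tpow Js B n \<in> tensors Js Js"
  by (induction n) (simp_all add: id_tensor_tensors ein_tensors)

lemma tpow_1: "B \<in> tensors Js Js \<Longrightarrow> tpow Js B 1 = B"
  by (simp add: ein_id_tensor_right)

lemma tpow_add:
  assumes "B \<in> tensors Js Js"
  shows "ein Js (tpow Js B m) (tpow Js B n) = tpow Js B (m + n)"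
  by (induction m) (simp_all add: ein_id_tensor_left[OF tpow_tensors[OF assms]] ein_assoc)

lemma tpow_Suc':
  assumes "B \<in> tensors Js Js"
  shows "ein Js (tpow Js B n) B = tpow Js B (Suc n)"
  using tpow_add[OF assms, of n 1] unfolding tpow_1[OF assms] by simp

lemma hermitian_tpow_ein_eq_0_imp:
  assumes "B \<in> tensors J J" and "ctrans B = B" and "W \<in> tensors J Q"
    and "ein J (tpow J B (Suc m)) W = (\<lambda>i j. 0)"
  shows "ein J B W = (\<lambda>i j. 0)"
  using assms(4)
proof (induction m)
  case (Suc m)
  have "ein J B (ein J B (ein J (tpow J B m) W)) = (\<lambda>i j. 0)"
    using Suc.prems by (simp add: ein_assoc)
  then have "ein J B (ein J (tpow J B m) W) = (\<lambda>i j. 0)"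
    by (rule hermitian_ein_ein_eq_0_imp[OF assms(1,2) ein_tensors[OF tpow_tensors[OF assms(1)] assms(3)]])
  then show ?case
    by (intro Suc.IH) (simp add: ein_assoc)
qed (simp add: ein_id_tensor_right[OF assms(1)])

lemma sum_tensor_apply: "(\<Sum>x\<in>S. F x) i j = (\<Sum>x\<in>S. F x i j :: complex)"
  by (induction S rule: infinite_finite_induct) simp_all

definition unit_tensor :: "nat list \<Rightarrow> nat list \<Rightarrow> tensor" where
  "unit_tensor a b = (\<lambda>i j. if i = a \<and> j = b then 1 else 0)"

lemma tensor_unit_expansion:
  assumes "A \<in> tensors I J"
  shows "A = (\<Sum>(a, b)\<in>idx I \<times> idx J. (\<lambda>i j. A a b * unit_tensor a b i j))"
proof (intro ext)
  fix i j
  have "A i j = (\<Sum>p\<in>idx I \<times> idx J. if p = (i, j) then A i j else 0)"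
    using tensorsD1[OF assms] tensorsD2[OF assms] by (auto simp: finite_idx)
  also have "\<dots> = (\<Sum>(a, b)\<in>idx I \<times> idx J. (\<lambda>i j. A a b * unit_tensor a b i j)) i j"
    unfolding sum_tensor_apply unit_tensor_def by (intro sum.cong) (auto split: if_splits)
  finally show "A i j = \<dots>" .
qed

lemma tensors_sequence_dependent:
  fixes F :: "nat \<Rightarrow> tensor"
  assumes F: "\<And>k. F k \<in> tensors I J"
  obtains n a where "\<exists>k\<le>n. a k \<noteq> 0" and "(\<lambda>i j. \<Sum>k\<le>n. a k * F k i j) = (\<lambda>i j. 0)"
proof -
  interpret tensor_space: vector_space "\<lambda>(c::complex) (A::tensor) i j. c * A i j"
    by unfold_locales (auto simp: plus_fun_def distrib_left distrib_right mult.assoc)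
  let ?U = "case_prod unit_tensor ` (idx I \<times> idx J)"
  let ?N = "card ?U"
  have span: "F k \<in> tensor_space.span ?U" for k
  proof (subst tensor_unit_expansion[OF F], intro tensor_space.span_sum, clarify)
    fix a b assume "a \<in> idx I" "b \<in> idx J"
    then have "unit_tensor a b \<in> ?U"
      by force
    then show "(\<lambda>i j. F k a b * unit_tensor a b i j) \<in> tensor_space.span ?U"
      by (rule tensor_space.span_scale[OF tensor_space.span_base])
  qed
  show thesis
  proof (cases "inj_on F {..?N}")
    case True
    let ?S = "F ` {..?N}"
    have "tensor_space.dependent ?S"
    proof (rule ccontr)
      assume "\<not> tensor_space.dependent ?S"
      then have "card ?S \<le> ?N"
        using tensor_space.independent_span_bound[of ?U ?S] span by (auto simp: finite_idx)
      with True show False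
        by (simp add: card_image)
    qed
    then obtain u where u: "\<exists>v\<in>?S. u v \<noteq> 0" "(\<Sum>v\<in>?S. (\<lambda>i j. u v * v i j)) = 0"
      by (auto simp: tensor_space.dependent_finite)
    show thesis
    proof (rule that[of _ "u \<circ> F"])
      show "\<exists>k\<le>?N. (u \<circ> F) k \<noteq> 0"
        using u(1) by auto
      show "(\<lambda>i j. \<Sum>k\<le>?N. (u \<circ> F) k * F k i j) = (\<lambda>i j. 0)"
        using u(2) sum.reindex[OF True, of "\<lambda>v. (\<lambda>i j. u v * v i j)"]
        by (auto simp: fun_eq_iff sum_tensor_apply)
    qed
  next
    case False
    then obtain p q where pq: "p \<noteq> q" "F p = F q" "p \<le> ?N" "q \<le> ?N"
      unfolding inj_on_def by auto
    show thesis
    proof (rule that[of _ "\<lambda>k. of_bool (k = p) - of_bool (k = q)"])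
      show "\<exists>k\<le>?N. of_bool (k = p) - of_bool (k = q) \<noteq> (0::complex)"
        using pq by auto
      show "(\<lambda>i j. \<Sum>k\<le>?N. (of_bool (k = p) - of_bool (k = q)) * F k i j) = (\<lambda>i j. 0)"
        using pq by (simp add: left_diff_distrib sum_subtractf)
    qed
  qed
qed

text \<open>P comes from a vanishing combination of powers of B with lowest nonzero coefficient a r:
  B^r = - (1 / a r) * (sum of a k * B^k for k > r), which is B^(r+1) times a polynomial in B.\<close>

lemma tpow_eq_tpow_Suc_ein:
  assumes B: "B \<in> tensors Js Js"
  obtains r P where "P \<in> tensors Js Js" and "ein Js B P = ein Js P B"
    and "ein Js (tpow Js B (Suc r)) P = tpow Js B r"
proof -
  obtain n a where a: "\<exists>k\<le>n. a k \<noteq> 0"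
    and rel: "(\<lambda>i j. \<Sum>k\<le>n. a k * tpow Js B k i j) = (\<lambda>i j. 0)"
    using tensors_sequence_dependent[OF tpow_tensors[OF B]] .
  define r where "r = (LEAST k. a k \<noteq> 0)"
  have ar: "a r \<noteq> 0" and rn: "r \<le> n"
    using a LeastI_ex[of "\<lambda>k. a k \<noteq> 0"] Least_le[of "\<lambda>k. a k \<noteq> 0"]
    unfolding r_def by (blast, fastforce)
  have below_r: "k < r \<Longrightarrow> a k = 0" for k
    unfolding r_def using not_less_Least by blast
  define P where "P = (\<lambda>i j. \<Sum>k\<in>{Suc r..n}. (- a k / a r) * tpow Js B (k - Suc r) i j)"
  show thesis
  proof (rule that)
    show "P \<in> tensors Js Js"
      unfolding P_def by (rule sum_tensors[OF tpow_tensors[OF B]])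
    show "ein Js B P = ein Js P B"
      unfolding P_def ein_sum_left ein_sum_right by (simp add: tpow_Suc'[OF B])
    show "ein Js (tpow Js B (Suc r)) P = tpow Js B r"
    proof (intro ext)
      fix i j
      have "(\<Sum>k\<le>n. a k * tpow Js B k i j) = (\<Sum>k\<in>{r..n}. a k * tpow Js B k i j)"
        by (rule sum.mono_neutral_right) (auto simp: below_r)
      also have "\<dots> = a r * tpow Js B r i j + (\<Sum>k\<in>{Suc r..n}. a k * tpow Js B k i j)"
        using rn by (simp add: sum.atLeast_Suc_atMost)
      finally have "a r * tpow Js B r i j + (\<Sum>k\<in>{Suc r..n}. a k * tpow Js B k i j) = 0"
        using fun_cong[OF fun_cong[OF rel, of i], of j] by simp
      moreover have "ein Js (tpow Js B (Suc r)) P i j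
          = (\<Sum>k\<in>{Suc r..n}. (- a k / a r) * tpow Js B k i j)"
        unfolding P_def ein_sum_right
        by (intro sum.cong) (auto simp del: tpow.simps simp add: tpow_add[OF B])
      ultimately show "ein Js (tpow Js B (Suc r)) P i j = tpow Js B r i j"
        using ar by (simp add: sum_divide_distrib[symmetric] sum_negf field_simps add_eq_0_iff)
    qed
  qed
qed

text \<open>With B^(r+1) P = B^r, the tensor W = I - B P satisfies B^r W = 0, hence B W = 0.\<close>

lemma hermitian_left_multiple_of_square:
  assumes B: "B \<in> tensors Js Js" and "ctrans B = B"
  obtains P where "P \<in> tensors Js Js" and "ein Js (ein Js P B) B = B"
proof -
  obtain r P where P: "P \<in> tensors Js Js" and comm: "ein Js B P = ein Js P B"
    and rel: "ein Js (tpow Js B (Suc r)) P = tpow Js B r"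
    using tpow_eq_tpow_Suc_ein[OF B] .
  define W where "W = (\<lambda>i j. id_tensor Js i j - ein Js B P i j)"
  have W: "W \<in> tensors Js Js"
    unfolding W_def using B P by (intro diff_tensors id_tensor_tensors ein_tensors)
  have "ein Js (tpow Js B r) W = (\<lambda>i j. 0)"
    using rel tpow_Suc'[OF B, of r]
    by (simp add: W_def ein_diff_right ein_id_tensor_right[OF tpow_tensors[OF B]] ein_assoc[symmetric])
  then have "ein Js B W = (\<lambda>i j. 0)"
    using hermitian_tpow_ein_eq_0_imp[OF B assms(2) W] ein_id_tensor_left[OF W]
    by (cases r) simp_all
  then have BBP: "ein Js B (ein Js B P) = B"
    by (subst eq_commute)
      (simp add: W_def ein_diff_right ein_id_tensor_right[OF B] tensor_eq_iff_diff_eq_0[of B])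
  have "ein Js (ein Js P B) B = ein Js B (ein Js B P)"
    by (simp add: comm[symmetric] ein_assoc)
  with P BBP show thesis
    by (intro that) simp_all
qed

lemma ex_ein_ein_ctrans_eq_ctrans:
  assumes A: "A \<in> tensors Is Js"
  obtains X where "X \<in> tensors Js Is" and "ein Js (ein Is X A) (ctrans A) = ctrans A"
proof -
  define B where "B = ein Is (ctrans A) A"
  have B: "B \<in> tensors Js Js"
    unfolding B_def by (rule ein_tensors[OF ctrans_tensors[OF A] A])
  obtain P where P: "P \<in> tensors Js Js" and PBB: "ein Js (ein Js P B) B = B"
    using hermitian_left_multiple_of_square[OF B] by (auto simp: B_def ctrans_ein)
  show thesis
  proof (rule that[of "ein Js P (ctrans A)"])
    show "ein Js P (ctrans A) \<in> tensors Js Is"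
      by (rule ein_tensors[OF P ctrans_tensors[OF A]])
    have "ein Js (ein Js P B) (ctrans A) = ctrans A"
      by (rule ein_gram_eq_imp_ein_ctrans_eq[OF A ein_tensors[OF P B]]) (fold B_def, rule PBB)
    then show "ein Js (ein Is (ein Js P (ctrans A)) A) (ctrans A) = ctrans A"
      by (simp add: B_def ein_assoc)
  qed
qed

lemma hermitian_absorbing_factor:
  assumes "ein Js (ein Is X A) (ctrans A) = ctrans A"
  shows "ctrans (ein Is X A) = ein Is X A" and "ein Js A (ein Is X A) = A"
proof -
  let ?M = "ein Is X A"
  have AM: "ein Js A (ctrans ?M) = A"
    using arg_cong[OF assms, of ctrans] by (simp add: ctrans_ein)
  then have "?M = ein Js ?M (ctrans ?M)"
    by (simp add: ein_assoc)
  then show hermitian: "ctrans ?M = ?M"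
    by (metis ctrans_ctrans ctrans_ein)
  show "ein Js A ?M = A"
    using AM by (simp add: hermitian)
qed

definition penrose :: "nat list \<Rightarrow> nat list \<Rightarrow> tensor \<Rightarrow> tensor \<Rightarrow> bool" where
  "penrose Is Js A X \<longleftrightarrow>
     ein Is (ein Js A X) A = A \<and> ein Js (ein Is X A) X = X \<and>
     ctrans (ein Js A X) = ein Js A X \<and> ctrans (ein Is X A) = ein Is X A"

lemma penrose_exists:
  assumes A: "A \<in> tensors Is Js"
  obtains Z where "Z \<in> tensors Js Is" and "penrose Is Js A Z"
proof -
  obtain X where X: "X \<in> tensors Js Is" and "ein Js (ein Is X A) (ctrans A) = ctrans A"
    using ex_ein_ein_ctrans_eq_ctrans[OF A] .
  then have hM: "ctrans (ein Is X A) = ein Is X A" and AM: "ein Js A (ein Is X A) = A"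
    using hermitian_absorbing_factor by blast+
  obtain V where V: "V \<in> tensors Is Js" and "ein Is (ein Js V (ctrans A)) A = A"
    using ex_ein_ein_ctrans_eq_ctrans[OF ctrans_tensors[OF A]] by auto
  define N where "N = ein Js V (ctrans A)"
  have hN: "ctrans N = N" and "ein Is (ctrans A) N = ctrans A"
    using hermitian_absorbing_factor[of Is Js V "ctrans A"]
      \<open>ein Is (ein Js V (ctrans A)) A = A\<close> by (auto simp: N_def)
  then have NA: "ein Is N A = A"
    by (metis ctrans_ctrans ctrans_ein)
  have N_eq: "N = ein Js A (ctrans V)"
    using hN by (simp add: N_def ctrans_ein)
  define Z where "Z = ein Is X N"
  have AZ: "ein Js A Z = N"
    using AM by (simp add: Z_def N_eq ein_assoc[symmetric])
  have ZA: "ein Is Z A = ein Is X A"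
    using NA by (simp add: Z_def ein_assoc)
  show thesis
  proof (rule that)
    show "Z \<in> tensors Js Is"
      unfolding Z_def N_def using X A V by (intro ein_tensors ctrans_tensors)
    show "penrose Is Js A Z"
      unfolding penrose_def by (simp add: AZ ZA hM hN NA ein_assoc Z_def[symmetric])
  qed
qed

lemma penrose_unique:
  assumes X: "penrose Is Js A X" and Y: "penrose Is Js A Y"
  shows "X = Y"
proof -
  have ctrans_A_Y: "ctrans A = ein Is (ctrans A) (ein Js A Y)"
    using Y arg_cong[of _ A ctrans] unfolding penrose_def by (metis ctrans_ein)
  have ctrans_A_X: "ctrans A = ein Js (ein Is X A) (ctrans A)"
    using X arg_cong[of _ A ctrans] unfolding penrose_def by (metis ctrans_ein ein_assoc)
  have X_eq: "X = ein Is X (ein Js (ctrans X) (ctrans A))"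
    using X unfolding penrose_def by (metis ctrans_ein ein_assoc)
  have Y_eq: "Y = ein Js (ein Is (ctrans A) (ctrans Y)) Y"
    using Y unfolding penrose_def by (metis ctrans_ein)
  have "X = ein Is X (ein Js (ctrans X) (ein Is (ctrans A) (ein Js A Y)))"
    using X_eq ctrans_A_Y by simp
  also have "\<dots> = ein Is X (ein Js A Y)"
    using X_eq by (simp add: ein_assoc[symmetric])
  also have "\<dots> = ein Js (ein Is X A) (ein Js (ein Is (ctrans A) (ctrans Y)) Y)"
    using Y_eq by (simp add: ein_assoc)
  also have "\<dots> = ein Js (ein Is (ein Js (ein Is X A) (ctrans A)) (ctrans Y)) Y"
    by (simp add: ein_assoc)
  also have "\<dots> = Y"
    using Y_eq ctrans_A_X by simp
  finally show ?thesis .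
qed

lemma mp_tensors:
  assumes A: "A \<in> tensors Is Js"
  shows "mp Is Js A \<in> tensors Js Is"
proof -
  obtain Z where Z: "Z \<in> tensors Js Is" "penrose Is Js A Z"
    using penrose_exists[OF A] .
  have "mp Is Js A = Z"
    unfolding mp_def penrose_def[symmetric]
    using Z penrose_unique by blast
  with Z show ?thesis by simp
qed

lemma ein_ein_eq_iff_ex_offset:
  assumes "B \<in> tensors G H" and "S \<in> tensors G H"
  shows "ein H (ein G P B) Q = ein H (ein G P S) Q \<longleftrightarrow>
    (\<exists>Y \<in> tensors G H. S = (\<lambda>i j. B i j + Y i j) \<and> ein H (ein G P Y) Q = (\<lambda>i j. 0))"
proof
  assume eq: "ein H (ein G P B) Q = ein H (ein G P S) Q"
  show "\<exists>Y \<in> tensors G H. S = (\<lambda>i j. B i j + Y i j) \<and> ein H (ein G P Y) Q = (\<lambda>i j. 0)"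
  proof (intro bexI conjI)
    show "(\<lambda>i j. S i j - B i j) \<in> tensors G H"
      using assms by (rule diff_tensors[rotated])
    show "S = (\<lambda>i j. B i j + (S i j - B i j))"
      by simp
    show "ein H (ein G P (\<lambda>i j. S i j - B i j)) Q = (\<lambda>i j. 0)"
      using eq by (simp add: ein_diff_left ein_diff_right)
  qed
next
  assume "\<exists>Y \<in> tensors G H. S = (\<lambda>i j. B i j + Y i j) \<and> ein H (ein G P Y) Q = (\<lambda>i j. 0)"
  then show "ein H (ein G P B) Q = ein H (ein G P S) Q"
    by (auto simp: ein_add_left ein_add_right)
qed

theorem theorem3p11:
  fixes Is Js Hs Gs :: "nat list" and R S T :: tensor
  assumes "R \<in> tensors Is Hs" and "S \<in> tensors Hs Gs" and "T \<in> tensors Gs Js"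
  shows "pmp Is Js Hs Gs R S T
           = ein Hs (ein Gs (mp Gs Js T) (mp Hs Gs S)) (mp Is Hs R)
         \<longleftrightarrow>
         (\<exists>Y \<in> tensors Gs Hs.
            mp Hs Gs S = (\<lambda>i j. mp Hs Gs (ein Js (ein Is (mp Is Hs R) (ein Gs (ein Hs R S) T))
                                                   (mp Gs Js T)) i j + Y i j)
          \<and> ein Hs (ein Gs (mp Gs Js T) Y) (mp Is Hs R) = (\<lambda>i j. 0))"
proof -
  have "mp Hs Gs (ein Js (ein Is (mp Is Hs R) (ein Gs (ein Hs R S) T)) (mp Gs Js T)) \<in> tensors Gs Hs"
    using assms by (intro mp_tensors ein_tensors)
  moreover have "mp Hs Gs S \<in> tensors Gs Hs"
    using assms(2) by (rule mp_tensors)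
  ultimately show ?thesis
    unfolding pmp_def Let_def by (rule ein_ein_eq_iff_ex_offset)
qed

end
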